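(* Let $X$ be a Tychonoff space. The following are equivalent: (1) $C_m(X)$ is $\sigma$-compact; (2) $C_m(X)$ is strictly H-bounded; (3) $C_m(X)$ is H-bounded; (4) $C_m(X)$ is strictly M-bounded; (5) $C_m(X)$ is M-bounded; (6) $C_u(X)$ is M-bounded; (7) $X$ is finite; (8) $C_p(X)$ is $\sigma$-compact.
   Context: $C(X)$ is the set of continuous real-valued functions on $X$, a topological group under pointwise addition with identity the zero function. $C_p(X)$: pointwise convergence topology. $C_u(X)$: uniform convergence topology (basic neighborhoods $\{g:|g(x)-f(x)|<\varepsilon\ \forall x\in X\}$, $\varepsilon>0$). $C_m(X)$: $m$-topology (basic neighborhoods $\{g:|g(x)-f(x)|<\varepsilon(x)\ \forall x\}$, $\varepsilon\in C(X)$ strictly positive). For a topological group $G$ with identity $e$: M-bounded means for every sequence $(U_n)$ of neighborhoods of $e$ there are finite $A_n\subset G$ with $G=\bigcup_nA_nU_n$; H-bounded means there are finite $A_n$ with each $x\in G$ in all but finitely many $A_nU_n$. In the game where in round $n$ ONE picks a neighborhood $U_n$ of $e$ and TWO a finite $A_n\subset G$, $G$ is strictly M-bounded (resp. strictly H-bounded) if TWO has a strategy guaranteeing $G=\bigcup_nA_nU_n$ (resp. each $x\in G$ lies in all but finitely many $A_nU_n$). *)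

theory Defs
  imports "HOL-Analysis.Analysis" "HOL-Library.Function_Algebras"
begin

definition tychonoff_space :: "'a topology \<Rightarrow> bool" where
  "tychonoff_space X \<longleftrightarrow> completely_regular_space X \<and> Hausdorff_space X"

text \<open>C(X): continuous real functions on X, normalised to 0 outside the carrier of X
  (so that the group operations are pointwise + and the zero function).\<close>
definition Cfun :: "'a topology \<Rightarrow> ('a \<Rightarrow> real) set" where
  "Cfun X = {f. continuous_map X euclideanreal f \<and> (\<forall>x. x \<notin> topspace X \<longrightarrow> f x = 0)}"

definition Cp :: "'a topology \<Rightarrow> ('a \<Rightarrow> real) topology" where
  "Cp X = topology (\<lambda>U. U \<subseteq> Cfun X \<and> (\<forall>f\<in>U. \<exists>F \<epsilon>. finite F \<and> F \<subseteq> topspace X \<and> \<epsilon> > 0 \<and>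
      {g \<in> Cfun X. \<forall>x\<in>F. \<bar>g x - f x\<bar> < \<epsilon>} \<subseteq> U))"

definition Cu :: "'a topology \<Rightarrow> ('a \<Rightarrow> real) topology" where
  "Cu X = topology (\<lambda>U. U \<subseteq> Cfun X \<and> (\<forall>f\<in>U. \<exists>\<epsilon>::real. \<epsilon> > 0 \<and>
      {g \<in> Cfun X. \<forall>x\<in>topspace X. \<bar>g x - f x\<bar> < \<epsilon>} \<subseteq> U))"

definition Cm :: "'a topology \<Rightarrow> ('a \<Rightarrow> real) topology" where
  "Cm X = topology (\<lambda>U. U \<subseteq> Cfun X \<and> (\<forall>f\<in>U. \<exists>\<epsilon>. continuous_map X euclideanreal \<epsilon> \<and>
      (\<forall>x\<in>topspace X. \<epsilon> x > 0) \<and>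
      {g \<in> Cfun X. \<forall>x\<in>topspace X. \<bar>g x - f x\<bar> < \<epsilon> x} \<subseteq> U))"

definition nbhd0 :: "('b::{plus,zero}) topology \<Rightarrow> 'b set \<Rightarrow> bool" where
  "nbhd0 G U \<longleftrightarrow> U \<subseteq> topspace G \<and> (\<exists>V. openin G V \<and> 0 \<in> V \<and> V \<subseteq> U)"

definition setplus :: "('b::plus) set \<Rightarrow> 'b set \<Rightarrow> 'b set" where
  "setplus A U = {a + u | a u. a \<in> A \<and> u \<in> U}"

definition sigma_compact :: "'b topology \<Rightarrow> bool" where
  "sigma_compact G \<longleftrightarrow> (\<exists>K::nat \<Rightarrow> 'b set. (\<forall>n. compactin G (K n)) \<and> topspace G = (\<Union>n. K n))"

definition M_bounded :: "('b::{plus,zero}) topology \<Rightarrow> bool" where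
  "M_bounded G \<longleftrightarrow> (\<forall>U::nat \<Rightarrow> 'b set. (\<forall>n. nbhd0 G (U n)) \<longrightarrow>
     (\<exists>A. (\<forall>n. finite (A n) \<and> A n \<subseteq> topspace G) \<and>
          topspace G = (\<Union>n. setplus (A n) (U n))))"

definition H_bounded :: "('b::{plus,zero}) topology \<Rightarrow> bool" where
  "H_bounded G \<longleftrightarrow> (\<forall>U::nat \<Rightarrow> 'b set. (\<forall>n. nbhd0 G (U n)) \<longrightarrow>
     (\<exists>A. (\<forall>n. finite (A n) \<and> A n \<subseteq> topspace G) \<and>
          (\<forall>x\<in>topspace G. \<forall>\<^sub>F n in sequentially. x \<in> setplus (A n) (U n))))"

text \<open>Games: a strategy of TWO maps the list of ONE's moves so far [U 0, ..., U n]
  to TWO's finite set A n.\<close>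
definition strictly_M_bounded :: "('b::{plus,zero}) topology \<Rightarrow> bool" where
  "strictly_M_bounded G \<longleftrightarrow> (\<exists>\<sigma>::'b set list \<Rightarrow> 'b set.
     \<forall>U::nat \<Rightarrow> 'b set. (\<forall>n. nbhd0 G (U n)) \<longrightarrow>
       (\<forall>n. finite (\<sigma> (map U [0..<Suc n])) \<and> \<sigma> (map U [0..<Suc n]) \<subseteq> topspace G) \<and>
       topspace G = (\<Union>n. setplus (\<sigma> (map U [0..<Suc n])) (U n)))"

definition strictly_H_bounded :: "('b::{plus,zero}) topology \<Rightarrow> bool" where
  "strictly_H_bounded G \<longleftrightarrow> (\<exists>\<sigma>::'b set list \<Rightarrow> 'b set.
     \<forall>U::nat \<Rightarrow> 'b set. (\<forall>n. nbhd0 G (U n)) \<longrightarrow>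
       (\<forall>n. finite (\<sigma> (map U [0..<Suc n])) \<and> \<sigma> (map U [0..<Suc n]) \<subseteq> topspace G) \<and>
       (\<forall>x\<in>topspace G. \<forall>\<^sub>F n in sequentially. x \<in> setplus (\<sigma> (map U [0..<Suc n])) (U n)))"

end

theory Submission
  imports Defs
begin

text \<open>
  For finite X, C_m(X) is a continuous image of the product of copies of the reals over X, hence
  sigma-compact; a sigma-compact group whose translations are open maps is strictly H-bounded,
  and the remaining implications are formal or follow because C_m(X) is finer than C_u(X) and
  C_p(X).

  For infinite X, a Baire-type construction of nested uniform balls produces a continuous
  function that lies in no A_n + U_n, where U_n is the uniform ball of radius 4^-(n+1): complete
  regularity at finitely many distinct points moves the n-th ball uniformly away from the
  finite set A_n. The same construction shows that C_p(X) is not sigma-compact if X has a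
  non-isolated point p, since then a compact subset of C_p(X) contains no uniform ball: it would
  contain, in the closure of the bump functions, a function agreeing with the centre at p and
  exceeding it by the radius elsewhere, which is continuous only if p is isolated. If X is
  infinite and discrete, a diagonal function escapes each of countably many compact sets.
\<close>

section \<open>The function spaces\<close>

lemma Cfun_zero [simp]: "0 \<in> Cfun X"
  by (simp add: Cfun_def zero_fun_def)

lemma Cfun_add: "f \<in> Cfun X \<Longrightarrow> g \<in> Cfun X \<Longrightarrow> f + g \<in> Cfun X"
  unfolding Cfun_def plus_fun_def by (auto intro: continuous_map_add)

lemma Cfun_diff: "f \<in> Cfun X \<Longrightarrow> g \<in> Cfun X \<Longrightarrow> f - g \<in> Cfun X"
  unfolding Cfun_def fun_diff_def by (auto intro: continuous_map_diff)

lemma Cfun_if_topspace: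
  "continuous_map X euclideanreal f \<Longrightarrow> (\<lambda>x. if x \<in> topspace X then f x else 0) \<in> Cfun X"
  unfolding Cfun_def by (auto elim: continuous_map_eq)

definition nbhd_topology :: "'b set \<Rightarrow> ('p \<Rightarrow> bool) \<Rightarrow> ('b \<Rightarrow> 'p \<Rightarrow> 'b set) \<Rightarrow> 'b topology" where
  "nbhd_topology S P B = topology (\<lambda>U. U \<subseteq> S \<and> (\<forall>f\<in>U. \<exists>p. P p \<and> B f p \<subseteq> U))"

lemma openin_nbhd_topology:
  assumes directed: "\<And>f p q. f \<in> S \<Longrightarrow> P p \<Longrightarrow> P q \<Longrightarrow> \<exists>r. P r \<and> B f r \<subseteq> B f p \<inter> B f q"
  shows "openin (nbhd_topology S P B) U \<longleftrightarrow> U \<subseteq> S \<and> (\<forall>f\<in>U. \<exists>p. P p \<and> B f p \<subseteq> U)"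
proof -
  define Op where "Op U \<longleftrightarrow> U \<subseteq> S \<and> (\<forall>f\<in>U. \<exists>p. P p \<and> B f p \<subseteq> U)" for U
  have "Op (U \<inter> V)" if U: "Op U" and V: "Op V" for U V
  proof -
    have "\<exists>r. P r \<and> B f r \<subseteq> U \<inter> V" if f: "f \<in> U \<inter> V" for f
    proof -
      from U f obtain p where p: "P p" "B f p \<subseteq> U"
        unfolding Op_def by blast
      from V f obtain q where q: "P q" "B f q \<subseteq> V"
        unfolding Op_def by blast
      from U f have "f \<in> S"
        unfolding Op_def by blast
      with p(1) q(1) obtain r where "P r" "B f r \<subseteq> B f p \<inter> B f q"
        using directed by metis
      with p(2) q(2) show ?thesis
        by blast
    qed
    with U show ?thesis
      unfolding Op_def by blast
  qed
  moreover have "Op (\<Union>\<K>)" if "\<forall>U\<in>\<K>. Op U" for \<K>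
    using that unfolding Op_def by (meson Union_iff Union_least Union_upper order_trans)
  ultimately have "istopology Op"
    unfolding istopology_def by blast
  then show ?thesis
    by (simp add: nbhd_topology_def Op_def[abs_def])
qed

lemma topspace_eqI:
  assumes "openin T S" and "\<And>U. openin T U \<Longrightarrow> U \<subseteq> S"
  shows "topspace T = S"
  using assms by (meson openin_subset openin_topspace subset_antisym)

lemma Cm_eq_nbhd_topology:
  "Cm X = nbhd_topology (Cfun X) (\<lambda>\<epsilon>. continuous_map X euclideanreal \<epsilon> \<and> (\<forall>x\<in>topspace X. 0 < \<epsilon> x))
     (\<lambda>f \<epsilon>. {g \<in> Cfun X. \<forall>x\<in>topspace X. \<bar>g x - f x\<bar> < \<epsilon> x})"
  by (simp add: Cm_def nbhd_topology_def)

lemma Cu_eq_nbhd_topology: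
  "Cu X = nbhd_topology (Cfun X) (\<lambda>\<epsilon>::real. 0 < \<epsilon>)
     (\<lambda>f \<epsilon>. {g \<in> Cfun X. \<forall>x\<in>topspace X. \<bar>g x - f x\<bar> < \<epsilon>})"
  by (simp add: Cu_def nbhd_topology_def)

lemma Cp_eq_nbhd_topology:
  "Cp X = nbhd_topology (Cfun X) (\<lambda>p. finite (fst p) \<and> fst p \<subseteq> topspace X \<and> 0 < snd p)
     (\<lambda>f p. {g \<in> Cfun X. \<forall>x\<in>fst p. \<bar>g x - f x\<bar> < snd p})"
  by (simp add: Cp_def nbhd_topology_def split_paired_Ex)

lemma openin_Cm:
  "openin (Cm X) U \<longleftrightarrow> U \<subseteq> Cfun X \<and> (\<forall>f\<in>U. \<exists>\<epsilon>. continuous_map X euclideanreal \<epsilon> \<and>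
      (\<forall>x\<in>topspace X. 0 < \<epsilon> x) \<and> {g \<in> Cfun X. \<forall>x\<in>topspace X. \<bar>g x - f x\<bar> < \<epsilon> x} \<subseteq> U)"
  unfolding Cm_eq_nbhd_topology
proof (subst openin_nbhd_topology)
  fix f and \<epsilon> \<delta> :: "'a \<Rightarrow> real"
  assume "continuous_map X euclideanreal \<epsilon> \<and> (\<forall>x\<in>topspace X. 0 < \<epsilon> x)"
    and "continuous_map X euclideanreal \<delta> \<and> (\<forall>x\<in>topspace X. 0 < \<delta> x)"
  then show "\<exists>\<rho>. (continuous_map X euclideanreal \<rho> \<and> (\<forall>x\<in>topspace X. 0 < \<rho> x)) \<and>
      {g \<in> Cfun X. \<forall>x\<in>topspace X. \<bar>g x - f x\<bar> < \<rho> x}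
        \<subseteq> {g \<in> Cfun X. \<forall>x\<in>topspace X. \<bar>g x - f x\<bar> < \<epsilon> x} \<inter> {g \<in> Cfun X. \<forall>x\<in>topspace X. \<bar>g x - f x\<bar> < \<delta> x}"
    by (intro exI[of _ "\<lambda>x. min (\<epsilon> x) (\<delta> x)"]) (auto intro: continuous_map_real_min)
qed (simp add: conj_assoc)

lemma openin_Cu:
  "openin (Cu X) U \<longleftrightarrow> U \<subseteq> Cfun X \<and>
     (\<forall>f\<in>U. \<exists>\<epsilon>::real. 0 < \<epsilon> \<and> {g \<in> Cfun X. \<forall>x\<in>topspace X. \<bar>g x - f x\<bar> < \<epsilon>} \<subseteq> U)"
  unfolding Cu_eq_nbhd_topology
proof (subst openin_nbhd_topology)
  fix f and \<epsilon> \<delta> :: real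
  assume "0 < \<epsilon>" "0 < \<delta>"
  then show "\<exists>\<rho>. 0 < \<rho> \<and> {g \<in> Cfun X. \<forall>x\<in>topspace X. \<bar>g x - f x\<bar> < \<rho>}
        \<subseteq> {g \<in> Cfun X. \<forall>x\<in>topspace X. \<bar>g x - f x\<bar> < \<epsilon>} \<inter> {g \<in> Cfun X. \<forall>x\<in>topspace X. \<bar>g x - f x\<bar> < \<delta>}"
    by (intro exI[of _ "min \<epsilon> \<delta>"]) auto
qed simp

lemma openin_Cp:
  "openin (Cp X) U \<longleftrightarrow> U \<subseteq> Cfun X \<and> (\<forall>f\<in>U. \<exists>F \<epsilon>. finite F \<and> F \<subseteq> topspace X \<and> 0 < \<epsilon> \<and>
      {g \<in> Cfun X. \<forall>x\<in>F. \<bar>g x - f x\<bar> < \<epsilon>} \<subseteq> U)"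
  unfolding Cp_eq_nbhd_topology
proof (subst openin_nbhd_topology)
  fix f and p q :: "'a set \<times> real"
  assume "finite (fst p) \<and> fst p \<subseteq> topspace X \<and> 0 < snd p"
    and "finite (fst q) \<and> fst q \<subseteq> topspace X \<and> 0 < snd q"
  then show "\<exists>r. (finite (fst r) \<and> fst r \<subseteq> topspace X \<and> 0 < snd r) \<and>
      {g \<in> Cfun X. \<forall>x\<in>fst r. \<bar>g x - f x\<bar> < snd r} \<subseteq>
        {g \<in> Cfun X. \<forall>x\<in>fst p. \<bar>g x - f x\<bar> < snd p} \<inter> {g \<in> Cfun X. \<forall>x\<in>fst q. \<bar>g x - f x\<bar> < snd q}"
    by (intro exI[of _ "(fst p \<union> fst q, min (snd p) (snd q))"]) auto
qed (simp add: split_paired_Ex conj_assoc)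

lemma topspace_Cm [simp]: "topspace (Cm X) = Cfun X"
  by (rule topspace_eqI) (auto simp: openin_Cm intro!: exI[of _ "\<lambda>x. 1"])

lemma topspace_Cu [simp]: "topspace (Cu X) = Cfun X"
  by (rule topspace_eqI) (auto simp: openin_Cu intro!: exI[of _ 1])

lemma topspace_Cp [simp]: "topspace (Cp X) = Cfun X"
  by (rule topspace_eqI) (auto simp: openin_Cp intro!: exI[of _ "{}"] exI[of _ 1])

lemma openin_Cu_imp_openin_Cm:
  assumes "openin (Cu X) U"
  shows "openin (Cm X) U"
  unfolding openin_Cm
proof (intro conjI ballI)
  show "U \<subseteq> Cfun X"
    using assms by (simp add: openin_Cu)
  fix f assume "f \<in> U"
  with assms obtain \<epsilon> :: real where "0 < \<epsilon>" "{g \<in> Cfun X. \<forall>x\<in>topspace X. \<bar>g x - f x\<bar> < \<epsilon>} \<subseteq> U"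
    unfolding openin_Cu by (meson bspec)
  then show "\<exists>\<epsilon>. continuous_map X euclideanreal \<epsilon> \<and> (\<forall>x\<in>topspace X. 0 < \<epsilon> x) \<and>
      {g \<in> Cfun X. \<forall>x\<in>topspace X. \<bar>g x - f x\<bar> < \<epsilon> x} \<subseteq> U"
    by (intro exI[of _ "\<lambda>x. \<epsilon>"]) simp
qed

lemma openin_Cp_imp_openin_Cm:
  assumes "openin (Cp X) U"
  shows "openin (Cm X) U"
  unfolding openin_Cm
proof (intro conjI ballI)
  show "U \<subseteq> Cfun X"
    using assms by (simp add: openin_Cp)
  fix f assume "f \<in> U"
  with assms obtain F and \<epsilon> :: real where "F \<subseteq> topspace X" "0 < \<epsilon>"
    and "{g \<in> Cfun X. \<forall>x\<in>F. \<bar>g x - f x\<bar> < \<epsilon>} \<subseteq> U"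
    unfolding openin_Cp by (meson bspec)
  moreover have "{g \<in> Cfun X. \<forall>x\<in>topspace X. \<bar>g x - f x\<bar> < \<epsilon>} \<subseteq> {g \<in> Cfun X. \<forall>x\<in>F. \<bar>g x - f x\<bar> < \<epsilon>}"
    using \<open>F \<subseteq> topspace X\<close> by auto
  ultimately have "{g \<in> Cfun X. \<forall>x\<in>topspace X. \<bar>g x - f x\<bar> < \<epsilon>} \<subseteq> U"
    by (meson order_trans)
  with \<open>0 < \<epsilon>\<close> show "\<exists>\<epsilon>. continuous_map X euclideanreal \<epsilon> \<and> (\<forall>x\<in>topspace X. 0 < \<epsilon> x) \<and>
      {g \<in> Cfun X. \<forall>x\<in>topspace X. \<bar>g x - f x\<bar> < \<epsilon> x} \<subseteq> U"
    by (intro exI[of _ "\<lambda>x. \<epsilon>"]) simp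
qed

section \<open>Boundedness properties of topological groups\<close>

lemma nbhd0_coarser:
  assumes "topspace T = topspace S" and "\<And>U. openin T U \<Longrightarrow> openin S U" and "nbhd0 T U"
  shows "nbhd0 S U"
  using assms unfolding nbhd0_def by metis

lemma M_bounded_coarser:
  assumes "topspace T = topspace S" and "\<And>U. openin T U \<Longrightarrow> openin S U" and "M_bounded S"
  shows "M_bounded T"
  using assms nbhd0_coarser[OF assms(1,2)] unfolding M_bounded_def by metis

lemma compactin_coarser:
  assumes "topspace T = topspace S" and "\<And>U. openin T U \<Longrightarrow> openin S U" and "compactin S K"
  shows "compactin T K"
proof -
  have "continuous_map S T (\<lambda>x. x)"
    unfolding continuous_map_def
  proof (intro conjI allI impI)
    show "(\<lambda>x. x) \<in> topspace S \<rightarrow> topspace T"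
      using assms(1) by simp
    fix U assume "openin T U"
    moreover have "{x \<in> topspace S. x \<in> U} = U"
      using openin_subset[OF \<open>openin T U\<close>] assms(1) by blast
    ultimately show "openin S {x \<in> topspace S. x \<in> U}"
      using assms(2) by simp
  qed
  from image_compactin[OF assms(3) this] show ?thesis
    by simp
qed

lemma sigma_compact_coarser:
  assumes "topspace T = topspace S" and "\<And>U. openin T U \<Longrightarrow> openin S U" and "sigma_compact S"
  shows "sigma_compact T"
  using assms compactin_coarser[OF assms(1,2)] unfolding sigma_compact_def by metis

lemma strictly_M_bounded_imp_M_bounded:
  assumes "strictly_M_bounded G"
  shows "M_bounded G"
proof -
  obtain \<sigma> where \<sigma>: "\<And>U. \<forall>n. nbhd0 G (U n) \<Longrightarrow>
       (\<forall>n. finite (\<sigma> (map U [0..<Suc n])) \<and> \<sigma> (map U [0..<Suc n]) \<subseteq> topspace G) \<and>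
       topspace G = (\<Union>n. setplus (\<sigma> (map U [0..<Suc n])) (U n))"
    using assms unfolding strictly_M_bounded_def by blast
  show ?thesis
    unfolding M_bounded_def
  proof (intro allI impI)
    fix U :: "nat \<Rightarrow> _" assume "\<forall>n. nbhd0 G (U n)"
    then show "\<exists>A. (\<forall>n. finite (A n) \<and> A n \<subseteq> topspace G) \<and> topspace G = (\<Union>n. setplus (A n) (U n))"
      by (intro exI[of _ "\<lambda>n. \<sigma> (map U [0..<Suc n])"] \<sigma>)
  qed
qed

lemma strictly_H_bounded_imp_H_bounded:
  assumes "strictly_H_bounded G"
  shows "H_bounded G"
proof -
  obtain \<sigma> where \<sigma>: "\<And>U. \<forall>n. nbhd0 G (U n) \<Longrightarrow>
       (\<forall>n. finite (\<sigma> (map U [0..<Suc n])) \<and> \<sigma> (map U [0..<Suc n]) \<subseteq> topspace G) \<and>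
       (\<forall>x\<in>topspace G. \<forall>\<^sub>F n in sequentially. x \<in> setplus (\<sigma> (map U [0..<Suc n])) (U n))"
    using assms unfolding strictly_H_bounded_def by blast
  show ?thesis
    unfolding H_bounded_def
  proof (intro allI impI)
    fix U :: "nat \<Rightarrow> _" assume "\<forall>n. nbhd0 G (U n)"
    then show "\<exists>A. (\<forall>n. finite (A n) \<and> A n \<subseteq> topspace G) \<and>
        (\<forall>x\<in>topspace G. \<forall>\<^sub>F n in sequentially. x \<in> setplus (A n) (U n))"
      by (intro exI[of _ "\<lambda>n. \<sigma> (map U [0..<Suc n])"] \<sigma>)
  qed
qed

lemma UN_eq_if_eventually_in:
  assumes "\<And>n. C n \<subseteq> S" and "\<And>x. x \<in> S \<Longrightarrow> \<forall>\<^sub>F n in sequentially. x \<in> C n"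
  shows "S = (\<Union>n. C n)"
proof
  show "S \<subseteq> (\<Union>n. C n)"
  proof
    fix x assume "x \<in> S"
    then obtain N where "\<forall>n\<ge>N. x \<in> C n"
      using assms(2) by (auto simp: eventually_sequentially)
    then show "x \<in> (\<Union>n. C n)"
      by blast
  qed
qed (use assms(1) in blast)

lemma setplus_subset_topspace:
  assumes add_closed: "\<And>a u. a \<in> topspace G \<Longrightarrow> u \<in> topspace G \<Longrightarrow> a + u \<in> topspace G"
    and "A \<subseteq> topspace G" and "nbhd0 G U"
  shows "setplus A U \<subseteq> topspace G"
  using assms unfolding setplus_def nbhd0_def by blast

lemma H_bounded_imp_M_bounded:
  assumes add_closed: "\<And>a u. a \<in> topspace G \<Longrightarrow> u \<in> topspace G \<Longrightarrow> a + u \<in> topspace G"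
    and "H_bounded G"
  shows "M_bounded G"
  unfolding M_bounded_def
proof (intro allI impI)
  fix U :: "nat \<Rightarrow> _" assume U: "\<forall>n. nbhd0 G (U n)"
  then obtain A where A: "\<forall>n. finite (A n) \<and> A n \<subseteq> topspace G"
    and ev: "\<forall>x\<in>topspace G. \<forall>\<^sub>F n in sequentially. x \<in> setplus (A n) (U n)"
    using assms(2) unfolding H_bounded_def by meson
  have "topspace G = (\<Union>n. setplus (A n) (U n))"
    using A U ev by (intro UN_eq_if_eventually_in setplus_subset_topspace[OF add_closed]) auto
  with A show "\<exists>A. (\<forall>n. finite (A n) \<and> A n \<subseteq> topspace G) \<and> topspace G = (\<Union>n. setplus (A n) (U n))"
    by blast
qed

lemma strictly_H_bounded_imp_strictly_M_bounded:
  assumes add_closed: "\<And>a u. a \<in> topspace G \<Longrightarrow> u \<in> topspace G \<Longrightarrow> a + u \<in> topspace G"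
    and "strictly_H_bounded G"
  shows "strictly_M_bounded G"
proof -
  obtain \<sigma> where \<sigma>: "\<And>U. \<forall>n. nbhd0 G (U n) \<Longrightarrow>
       (\<forall>n. finite (\<sigma> (map U [0..<Suc n])) \<and> \<sigma> (map U [0..<Suc n]) \<subseteq> topspace G) \<and>
       (\<forall>x\<in>topspace G. \<forall>\<^sub>F n in sequentially. x \<in> setplus (\<sigma> (map U [0..<Suc n])) (U n))"
    using assms(2) unfolding strictly_H_bounded_def by blast
  have "topspace G = (\<Union>n. setplus (\<sigma> (map U [0..<Suc n])) (U n))" if U: "\<forall>n. nbhd0 G (U n)" for U
    using \<sigma>[OF U] U by (intro UN_eq_if_eventually_in setplus_subset_topspace[OF add_closed]) auto
  with \<sigma> show ?thesis
    unfolding strictly_M_bounded_def by (intro exI[of _ \<sigma>]) simp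
qed

lemma compactin_subset_setplus:
  fixes G :: "'b::monoid_add topology"
  assumes translate: "\<And>a V. a \<in> topspace G \<Longrightarrow> openin G V \<Longrightarrow> openin G ((+) a ` V)"
    and L: "compactin G L" and U: "nbhd0 G U"
  obtains A where "finite A" "A \<subseteq> topspace G" "L \<subseteq> setplus A U"
proof -
  obtain V where V: "openin G V" "0 \<in> V" "V \<subseteq> U"
    using U unfolding nbhd0_def by blast
  have L_sub: "L \<subseteq> topspace G"
    using L by (rule compactin_subset_topspace)
  have "openin G W" if "W \<in> (\<lambda>a. (+) a ` V) ` L" for W
    using that translate V(1) L_sub by blast
  moreover have "a \<in> (+) a ` V" for a
    using V(2) by (metis add.right_neutral image_eqI)
  then have "L \<subseteq> \<Union> ((\<lambda>a. (+) a ` V) ` L)"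
    by blast
  ultimately obtain \<F> where "finite \<F>" "\<F> \<subseteq> (\<lambda>a. (+) a ` V) ` L" "L \<subseteq> \<Union>\<F>"
    using L unfolding compactin_def by meson
  then obtain A where A: "A \<subseteq> L" "finite A" "L \<subseteq> \<Union> ((\<lambda>a. (+) a ` V) ` A)"
    by (metis finite_subset_image)
  have "L \<subseteq> setplus A U"
    using A(3) V(3) unfolding setplus_def by blast
  with A L_sub show thesis
    using that by blast
qed

lemma sigma_compact_imp_strictly_H_bounded:
  fixes G :: "'b::monoid_add topology"
  assumes translate: "\<And>a V. a \<in> topspace G \<Longrightarrow> openin G V \<Longrightarrow> openin G ((+) a ` V)"
    and "sigma_compact G"
  shows "strictly_H_bounded G"
proof -
  obtain K :: "nat \<Rightarrow> 'b set" where K: "\<And>n. compactin G (K n)" "topspace G = (\<Union>n. K n)"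
    using assms(2) unfolding sigma_compact_def by blast
  define L where "L n = \<Union> (K ` {..n})" for n
  have L: "compactin G (L n)" for n
    unfolding L_def using K(1) by (intro compactin_Union) auto
  \<comment> \<open>In round n, when Us = [U 0, ..., U n], TWO covers K 0 \<union> ... \<union> K n by translates of U n.\<close>
  define \<sigma> where "\<sigma> Us = (SOME A. finite A \<and> A \<subseteq> topspace G \<and> L (length Us - 1) \<subseteq> setplus A (last Us))"
    for Us :: "'b set list"
  have \<sigma>: "finite (\<sigma> (map U [0..<Suc n])) \<and> \<sigma> (map U [0..<Suc n]) \<subseteq> topspace G \<and>
      L n \<subseteq> setplus (\<sigma> (map U [0..<Suc n])) (U n)" if U: "nbhd0 G (U n)" for U n
  proof -
    obtain A where "finite A" "A \<subseteq> topspace G" "L n \<subseteq> setplus A (U n)"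
      using compactin_subset_setplus[OF translate L U] .
    then have "\<exists>A. finite A \<and> A \<subseteq> topspace G \<and> L n \<subseteq> setplus A (U n)"
      by blast
    from someI_ex[OF this] show ?thesis
      unfolding \<sigma>_def by simp
  qed
  have "\<forall>\<^sub>F n in sequentially. x \<in> setplus (\<sigma> (map U [0..<Suc n])) (U n)"
    if "\<forall>n. nbhd0 G (U n)" and "x \<in> topspace G" for U x
  proof -
    obtain m where "x \<in> K m"
      using K(2) \<open>x \<in> topspace G\<close> by blast
    then have "x \<in> L n" if "m \<le> n" for n
      using that unfolding L_def by blast
    then show ?thesis
      using \<sigma> \<open>\<forall>n. nbhd0 G (U n)\<close> unfolding eventually_sequentially by blast
  qed
  then show ?thesis
    unfolding strictly_H_bounded_def using \<sigma> by (intro exI[of _ \<sigma>]) blast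
qed

lemma openin_Cm_translation:
  assumes a: "a \<in> Cfun X" and V: "openin (Cm X) V"
  shows "openin (Cm X) ((+) a ` V)"
  unfolding openin_Cm
proof (intro conjI ballI)
  have V_sub: "V \<subseteq> Cfun X"
    using V by (simp add: openin_Cm)
  then show "(+) a ` V \<subseteq> Cfun X"
    using a Cfun_add by blast
  fix w assume "w \<in> (+) a ` V"
  then obtain v where v: "v \<in> V" "w = a + v"
    by blast
  obtain \<epsilon> where \<epsilon>: "continuous_map X euclideanreal \<epsilon>" "\<forall>x\<in>topspace X. 0 < \<epsilon> x"
    and ball: "{g \<in> Cfun X. \<forall>x\<in>topspace X. \<bar>g x - v x\<bar> < \<epsilon> x} \<subseteq> V"
    using V v(1) unfolding openin_Cm by blast
  have "g \<in> (+) a ` V" if g: "g \<in> Cfun X" "\<forall>x\<in>topspace X. \<bar>g x - w x\<bar> < \<epsilon> x" for g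
  proof -
    have "\<forall>x\<in>topspace X. \<bar>(g - a) x - v x\<bar> < \<epsilon> x"
      using g(2) v(2) by (simp add: algebra_simps)
    then have "g - a \<in> V"
      using ball Cfun_diff[OF g(1) a] by blast
    moreover have "g = a + (g - a)"
      by (simp add: fun_eq_iff)
    ultimately show ?thesis
      by (metis image_eqI)
  qed
  with \<epsilon> show "\<exists>\<epsilon>. continuous_map X euclideanreal \<epsilon> \<and> (\<forall>x\<in>topspace X. 0 < \<epsilon> x) \<and>
      {g \<in> Cfun X. \<forall>x\<in>topspace X. \<bar>g x - w x\<bar> < \<epsilon> x} \<subseteq> (+) a ` V"
    by blast
qed

lemma sigma_compact_Cm_imp_strictly_H_bounded:
  "sigma_compact (Cm X) \<Longrightarrow> strictly_H_bounded (Cm X)"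
  by (rule sigma_compact_imp_strictly_H_bounded) (simp_all add: openin_Cm_translation)

section \<open>Finite spaces\<close>

lemma continuous_map_product_Cm:
  assumes t1: "t1_space X" and fin: "finite (topspace X)"
  shows "continuous_map (product_topology (\<lambda>_. euclideanreal) (topspace X)) (Cm X)
           (\<lambda>g x. if x \<in> topspace X then g x else 0)"
    (is "continuous_map ?P (Cm X) ?ext")
proof -
  have discrete: "X = discrete_topology (topspace X)"
    using finite_t1_space_imp_discrete_topology[OF refl fin t1] .
  have "continuous_map X euclideanreal h" for h :: "'a \<Rightarrow> real"
    by (subst discrete) simp
  then have ext_Cfun: "?ext g \<in> Cfun X" for g
    unfolding Cfun_def by simp
  show ?thesis
    unfolding continuous_map_def
  proof (intro conjI allI impI)
    show "?ext \<in> topspace ?P \<rightarrow> topspace (Cm X)"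
      using ext_Cfun by simp
    fix U assume U: "openin (Cm X) U"
    show "openin ?P {g \<in> topspace ?P. ?ext g \<in> U}"
      unfolding openin_product_topology_alt
    proof
      fix g assume g: "g \<in> {g \<in> topspace ?P. ?ext g \<in> U}"
      define f where "f = ?ext g"
      have "f \<in> U"
        using g unfolding f_def by blast
      then obtain \<epsilon> where \<epsilon>: "\<forall>x\<in>topspace X. 0 < \<epsilon> x"
        and ball: "{h \<in> Cfun X. \<forall>x\<in>topspace X. \<bar>h x - f x\<bar> < \<epsilon> x} \<subseteq> U"
        using U unfolding openin_Cm by blast
      define e where "e = Min (insert 1 (\<epsilon> ` topspace X))"
      have "0 < e"
        unfolding e_def using fin \<epsilon> by (simp add: Min_gr_iff)
      have e_le: "e \<le> \<epsilon> x" if "x \<in> topspace X" for x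
        unfolding e_def using fin that by (simp add: Min_le_iff)
      have "?ext h \<in> U" if "h \<in> (\<Pi>\<^sub>E i\<in>topspace X. ball (g i) e)" for h
      proof -
        have "\<bar>?ext h x - f x\<bar> < \<epsilon> x" if "x \<in> topspace X" for x
          using \<open>h \<in> _\<close> that e_le[OF that] by (auto simp: f_def PiE_iff dist_real_def)
        then show ?thesis
          using ball ext_Cfun by blast
      qed
      with \<open>0 < e\<close> g show "\<exists>V. finite {i \<in> topspace X. V i \<noteq> topspace euclideanreal} \<and>
          (\<forall>i\<in>topspace X. openin euclideanreal (V i)) \<and>
          g \<in> Pi\<^sub>E (topspace X) V \<and> Pi\<^sub>E (topspace X) V \<subseteq> {g \<in> topspace ?P. ?ext g \<in> U}"
        by (intro exI[of _ "\<lambda>i. ball (g i) e"]) (auto simp: fin PiE_iff)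
    qed
  qed
qed

lemma finite_imp_sigma_compact_Cm:
  assumes "t1_space X" and fin: "finite (topspace X)"
  shows "sigma_compact (Cm X)"
proof -
  let ?ext = "\<lambda>g x. if x \<in> topspace X then g x else 0 :: real"
  define K where "K n = ?ext ` (\<Pi>\<^sub>E i\<in>topspace X. {- real n .. real n})" for n
  have K: "compactin (Cm X) (K n)" for n
    unfolding K_def using continuous_map_product_Cm[OF assms]
    by (rule image_compactin[rotated]) (simp add: compactin_PiE)
  have "f \<in> (\<Union>n. K n)" if f: "f \<in> Cfun X" for f
  proof -
    obtain n where n: "(\<Sum>x\<in>topspace X. \<bar>f x\<bar>) \<le> real n"
      using real_arch_simple by blast
    have "f x \<in> {- real n .. real n}" if "x \<in> topspace X" for x
    proof -
      have "\<bar>f x\<bar> \<le> real n"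
        using member_le_sum[OF that, of "\<lambda>x. \<bar>f x\<bar>"] fin n by simp
      then show ?thesis
        by (simp add: abs_le_iff)
    qed
    then have box: "restrict f (topspace X) \<in> (\<Pi>\<^sub>E i\<in>topspace X. {- real n .. real n})"
      by (simp add: restrict_PiE_iff)
    have "f x = 0" if "x \<notin> topspace X" for x
      using f that unfolding Cfun_def by blast
    then have "f = ?ext (restrict f (topspace X))"
      by auto
    then have "f \<in> K n"
      unfolding K_def using box by (rule image_eqI)
    then show ?thesis
      by blast
  qed
  moreover have "K n \<subseteq> Cfun X" for n
    using compactin_subset_topspace[OF K] by simp
  ultimately have "topspace (Cm X) = (\<Union>n. K n)"
    by auto
  with K show ?thesis
    unfolding sigma_compact_def by blast
qed

section \<open>Uniform approximation on infinite spaces\<close>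

lemma completely_regular_interpolation:
  assumes cr: "completely_regular_space X" and t1: "t1_space X"
  shows "finite I \<Longrightarrow> inj_on pt I \<Longrightarrow> pt ` I \<subseteq> topspace X \<Longrightarrow> \<forall>i\<in>I. \<bar>c i\<bar> \<le> (1::real) \<Longrightarrow>
    \<exists>\<phi>. continuous_map X euclideanreal \<phi> \<and> (\<forall>x. \<bar>\<phi> x\<bar> \<le> 1) \<and> (\<forall>i\<in>I. \<phi> (pt i) = c i)"
proof (induction I rule: finite_induct)
  case empty
  show ?case
    by (intro exI[of _ "\<lambda>x. 0"]) simp
next
  case (insert i I)
  then obtain \<phi> where \<phi>: "continuous_map X euclideanreal \<phi>" "\<forall>x. \<bar>\<phi> x\<bar> \<le> 1" "\<forall>j\<in>I. \<phi> (pt j) = c j"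
    by auto
  have "closedin X (pt ` I)"
    using t1 insert by (simp add: t1_space_closedin_finite)
  moreover have "pt i \<in> topspace X - pt ` I"
    using insert by auto
  ultimately obtain f where f: "continuous_map X euclideanreal f" "f (pt i) = 0" "f ` pt ` I \<subseteq> {1}"
    by (metis cr completely_regular_space_alt)
  \<comment> \<open>Correct \<phi> at pt i by a multiple of 1 - f, which vanishes on pt ` I, then clip to [-1, 1].\<close>
  define \<psi> where "\<psi> x = max (-1) (min 1 (\<phi> x + (c i - \<phi> (pt i)) * (1 - f x)))" for x
  have "continuous_map X euclideanreal \<psi>"
    unfolding \<psi>_def using \<phi>(1) f(1) by (intro continuous_intros) auto
  moreover have "\<psi> (pt j) = c j" if "j \<in> insert i I" for j
    using that f(2,3) \<phi>(3) insert.prems(3) unfolding \<psi>_def by (auto simp: image_subset_iff)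
  ultimately show ?case
    unfolding \<psi>_def by (intro exI[of _ \<psi>]) (auto simp: \<psi>_def)
qed

lemma finite_inj_into_infinite:
  assumes "finite A" and "infinite S"
  obtains pt where "inj_on pt A" "pt ` A \<subseteq> S"
proof -
  obtain B where "finite B" "card B = card A" "B \<subseteq> S"
    using infinite_arbitrarily_large[OF assms(2)] by blast
  with assms(1) show thesis
    by (metis card_le_inj order_refl order_trans that)
qed

lemma Cfun_uniform_ball_far_from_finite:
  assumes cr: "completely_regular_space X" and t1: "t1_space X"
    and inf: "infinite (topspace X)" and f: "f \<in> Cfun X" and "0 < \<rho>" and A: "finite A"
  obtains g where "g \<in> Cfun X" "\<forall>x\<in>topspace X. \<bar>g x - f x\<bar> \<le> 2 * \<rho>"
    "\<And>h a. \<forall>x\<in>topspace X. \<bar>h x - g x\<bar> \<le> \<rho> \<Longrightarrow> a \<in> A \<Longrightarrow> \<exists>x\<in>topspace X. \<rho> \<le> \<bar>h x - a x\<bar>"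
proof -
  obtain pt where pt: "inj_on pt A" "pt ` A \<subseteq> topspace X"
    using finite_inj_into_infinite[OF A inf] .
  define c where "c a = (if f (pt a) \<le> a (pt a) then -1 else 1 :: real)" for a
  have "\<forall>a\<in>A. \<bar>c a\<bar> \<le> 1"
    by (simp add: c_def)
  then obtain \<phi> where \<phi>: "continuous_map X euclideanreal \<phi>" "\<forall>x. \<bar>\<phi> x\<bar> \<le> 1" "\<forall>a\<in>A. \<phi> (pt a) = c a"
    using completely_regular_interpolation[OF cr t1 A pt] by blast
  define g where "g x = (if x \<in> topspace X then f x + 2 * \<rho> * \<phi> x else 0)" for x
  have "continuous_map X euclideanreal f"
    using f by (simp add: Cfun_def)
  with \<phi>(1) have "g \<in> Cfun X"
    unfolding g_def by (intro Cfun_if_topspace continuous_intros)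
  moreover have "\<bar>g x - f x\<bar> \<le> 2 * \<rho>" if "x \<in> topspace X" for x
    using that \<phi>(2) \<open>0 < \<rho>\<close> by (simp add: g_def abs_mult mult_le_cancel_left1)
  moreover have "\<exists>x\<in>topspace X. \<rho> \<le> \<bar>h x - a x\<bar>"
    if h: "\<forall>x\<in>topspace X. \<bar>h x - g x\<bar> \<le> \<rho>" and "a \<in> A" for h a
  proof
    show "pt a \<in> topspace X"
      using \<open>a \<in> A\<close> pt(2) by blast
    then have "2 * \<rho> \<le> \<bar>g (pt a) - a (pt a)\<bar>" "\<bar>h (pt a) - g (pt a)\<bar> \<le> \<rho>"
      using \<open>a \<in> A\<close> \<phi>(3) \<open>0 < \<rho>\<close> h by (auto simp: g_def c_def)
    then show "\<rho> \<le> \<bar>h (pt a) - a (pt a)\<bar>"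
      by linarith
  qed
  ultimately show thesis
    using that by blast
qed

lemma nested_balls_uniform_limit:
  fixes fs :: "nat \<Rightarrow> 'a \<Rightarrow> real"
  assumes fs: "\<And>n. fs n \<in> Cfun X" and rs: "rs \<longlonglongrightarrow> 0"
    and nested: "\<And>n x. x \<in> topspace X \<Longrightarrow> \<bar>fs (Suc n) x - fs n x\<bar> + rs (Suc n) \<le> rs n"
  obtains F where "F \<in> Cfun X" "\<And>n x. x \<in> topspace X \<Longrightarrow> \<bar>F x - fs n x\<bar> \<le> rs n"
proof -
  have nested_le: "\<bar>fs m x - fs n x\<bar> \<le> rs n - rs m" if "n \<le> m" "x \<in> topspace X" for m n x
    using that(1)
  proof (induction m rule: dec_induct)
    case (step m)
    then show ?case
      using nested[OF that(2), of m] by linarith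
  qed simp
  have Cauchy: "\<exists>N. \<forall>m n x. N \<le> m \<longrightarrow> N \<le> n \<longrightarrow> x \<in> topspace X \<longrightarrow> dist (fs m x) (fs n x) < \<epsilon>"
    if "0 < \<epsilon>" for \<epsilon>
  proof -
    obtain N where N: "\<And>k. N \<le> k \<Longrightarrow> \<bar>rs k\<bar> < \<epsilon> / 4"
      using LIMSEQ_D[OF rs, of "\<epsilon> / 4"] \<open>0 < \<epsilon>\<close> by auto
    have "dist (fs m x) (fs n x) < \<epsilon>" if "N \<le> m" "N \<le> n" "x \<in> topspace X" for m n x
      using nested_le[OF that(1,3)] nested_le[OF that(2,3)] N[OF order_refl] N[OF that(1)] N[OF that(2)]
      unfolding dist_real_def by linarith
    then show ?thesis
      by blast
  qed
  obtain g where g: "continuous_map X euclideanreal g"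
    and uniform: "\<And>\<epsilon>. 0 < \<epsilon> \<Longrightarrow> \<forall>\<^sub>F n in sequentially. \<forall>x\<in>topspace X. dist (fs n x) (g x) < \<epsilon>"
    using Met_TC.continuous_map_uniformly_Cauchy_limit[of X fs] fs Cauchy
    by (auto simp: Cfun_def complete_UNIV)
  have "\<bar>g x - fs n x\<bar> \<le> rs n" if x: "x \<in> topspace X" for n x
  proof -
    have "(\<lambda>m. fs m x) \<longlonglongrightarrow> g x"
      unfolding tendsto_iff using uniform x by (fastforce elim: eventually_mono)
    then have "(\<lambda>m. \<bar>fs m x - fs n x\<bar> + rs m) \<longlonglongrightarrow> \<bar>g x - fs n x\<bar> + 0"
      by (intro tendsto_intros rs)
    then show ?thesis
      using nested_le[OF _ x] by (intro Lim_bounded[where M = n]) (auto simp: algebra_simps)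
  qed
  with g show thesis
    using that[of "\<lambda>x. if x \<in> topspace X then g x else 0"] by (simp add: Cfun_if_topspace)
qed

lemma nested_balls_limit:
  fixes Q :: "nat \<Rightarrow> ('a \<Rightarrow> real) \<Rightarrow> real \<Rightarrow> ('a \<Rightarrow> real) \<Rightarrow> real \<Rightarrow> bool"
  assumes step: "\<And>n f r. f \<in> Cfun X \<Longrightarrow> 0 < r \<Longrightarrow> \<exists>g r'. g \<in> Cfun X \<and> 0 < r' \<and> r' \<le> r / 2 \<and>
      (\<forall>x\<in>topspace X. \<bar>g x - f x\<bar> + r' \<le> r) \<and> Q n f r g r'"
    and f0: "f0 \<in> Cfun X" and r0: "0 < r0"
  obtains F fs rs where "F \<in> Cfun X" "fs 0 = f0" "rs 0 = r0"
    "\<And>n. Q n (fs n) (rs n) (fs (Suc n)) (rs (Suc n))"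
    "\<And>n x. x \<in> topspace X \<Longrightarrow> \<bar>F x - fs n x\<bar> \<le> rs n"
proof -
  define P where "P n p \<longleftrightarrow> fst p \<in> Cfun X \<and> 0 < snd p \<and> (n = 0 \<longrightarrow> p = (f0, r0))" for n :: nat and p
  define R where "R n p q \<longleftrightarrow> snd q \<le> snd p / 2 \<and> (\<forall>x\<in>topspace X. \<bar>fst q x - fst p x\<bar> + snd q \<le> snd p)
      \<and> Q n (fst p) (snd p) (fst q) (snd q)" for n :: nat and p q
  have "P 0 (f0, r0)"
    using f0 r0 unfolding P_def by simp
  moreover have "\<exists>q. P (Suc n) q \<and> R n p q" if "P n p" for n p
    using step[of "fst p" "snd p" n] that unfolding P_def R_def by auto
  ultimately obtain seq where seq: "\<And>n. P n (seq n) \<and> R n (seq n) (seq (Suc n))"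
    using dependent_nat_choice[of P R] by blast
  define fs where "fs n = fst (seq n)" for n
  define rs where "rs n = snd (seq n)" for n
  have fs: "fs n \<in> Cfun X" and rs_pos: "0 < rs n" for n
    using seq unfolding P_def fs_def rs_def by auto
  have rs_le: "rs n \<le> r0 / 2 ^ n" for n
  proof (induction n)
    case 0
    then show ?case
      using seq[of 0] unfolding P_def rs_def by simp
  next
    case (Suc n)
    then show ?case
      using seq[of n] unfolding R_def rs_def by (simp add: divide_right_mono)
  qed
  have "\<bar>rs n\<bar> \<le> r0 / 2 ^ n" for n
    using rs_pos[of n] rs_le[of n] by simp
  then have rs_lim: "rs \<longlonglongrightarrow> 0"
    by (intro Lim_null_comparison[OF _ LIMSEQ_divide_realpow_zero[of 2 r0]]) (auto intro: always_eventually)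
  have nested: "\<bar>fs (Suc n) x - fs n x\<bar> + rs (Suc n) \<le> rs n" if "x \<in> topspace X" for n x
    using seq[of n] that unfolding R_def fs_def rs_def by auto
  obtain F where "F \<in> Cfun X" "\<And>n x. x \<in> topspace X \<Longrightarrow> \<bar>F x - fs n x\<bar> \<le> rs n"
    using nested_balls_uniform_limit[where fs = fs and rs = rs, OF fs rs_lim nested] by blast
  moreover have "fs 0 = f0" "rs 0 = r0"
    using seq[of 0] unfolding P_def fs_def rs_def by auto
  moreover have "Q n (fs n) (rs n) (fs (Suc n)) (rs (Suc n))" for n
    using seq[of n] unfolding R_def fs_def rs_def by auto
  ultimately show thesis
    using that by blast
qed

section \<open>M-boundedness of the uniform topology\<close>

definition sup_norm_ball :: "'a topology \<Rightarrow> real \<Rightarrow> ('a \<Rightarrow> real) set" where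
  "sup_norm_ball X \<delta> = {g \<in> Cfun X. \<exists>s<\<delta>. \<forall>x\<in>topspace X. \<bar>g x\<bar> \<le> s}"

lemma openin_Cu_sup_norm_ball: "openin (Cu X) (sup_norm_ball X \<delta>)"
  unfolding openin_Cu
proof (intro conjI ballI)
  show "sup_norm_ball X \<delta> \<subseteq> Cfun X"
    unfolding sup_norm_ball_def by blast
  fix g assume "g \<in> sup_norm_ball X \<delta>"
  then obtain s where s: "s < \<delta>" "\<forall>x\<in>topspace X. \<bar>g x\<bar> \<le> s"
    unfolding sup_norm_ball_def by blast
  have "h \<in> sup_norm_ball X \<delta>" if h: "h \<in> Cfun X" "\<forall>x\<in>topspace X. \<bar>h x - g x\<bar> < (\<delta> - s) / 2" for h
  proof -
    have "\<bar>h x\<bar> \<le> (s + \<delta>) / 2" if "x \<in> topspace X" for x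
      using h(2) s(2) that abs_triangle_ineq[of "h x - g x" "g x"] by fastforce
    moreover have "(s + \<delta>) / 2 < \<delta>"
      using s(1) by simp
    ultimately show ?thesis
      unfolding sup_norm_ball_def using h(1) by blast
  qed
  with s(1) show "\<exists>\<epsilon>>0. {h \<in> Cfun X. \<forall>x\<in>topspace X. \<bar>h x - g x\<bar> < \<epsilon>} \<subseteq> sup_norm_ball X \<delta>"
    by (intro exI[of _ "(\<delta> - s) / 2"]) auto
qed

lemma nbhd0_Cu_sup_norm_ball:
  assumes "0 < \<delta>"
  shows "nbhd0 (Cu X) (sup_norm_ball X \<delta>)"
proof -
  have "0 \<in> sup_norm_ball X \<delta>"
    using assms unfolding sup_norm_ball_def by (auto intro: exI[of _ 0])
  then show ?thesis
    unfolding nbhd0_def using openin_Cu_sup_norm_ball openin_subset by blast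
qed

lemma M_bounded_Cu_imp_finite:
  assumes cr: "completely_regular_space X" and t1: "t1_space X" and M: "M_bounded (Cu X)"
  shows "finite (topspace X)"
proof (rule ccontr)
  assume inf: "infinite (topspace X)"
  define U where "U n = sup_norm_ball X (1 / 4 ^ Suc n)" for n
  have "\<forall>n. nbhd0 (Cu X) (U n)"
    unfolding U_def by (simp add: nbhd0_Cu_sup_norm_ball)
  with M obtain A where A: "\<And>n. finite (A n)" and cover: "topspace (Cu X) = (\<Union>n. setplus (A n) (U n))"
    unfolding M_bounded_def by meson
  \<comment> \<open>The radii are pinned to r / 4, so that the n-th ball has radius 4^-n, matching U n.\<close>
  define Q where "Q n f r g r' \<longleftrightarrow> r' = r / 4 \<and> (\<forall>h. (\<forall>x\<in>topspace X. \<bar>h x - g x\<bar> \<le> r') \<longrightarrow>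
       (\<forall>a\<in>A n. \<exists>x\<in>topspace X. r' \<le> \<bar>h x - a x\<bar>))"
    for n and f :: "'a \<Rightarrow> real" and r and g :: "'a \<Rightarrow> real" and r' :: real
  have step: "\<exists>g r'. g \<in> Cfun X \<and> 0 < r' \<and> r' \<le> r / 2 \<and> (\<forall>x\<in>topspace X. \<bar>g x - f x\<bar> + r' \<le> r) \<and> Q n f r g r'"
    if f: "f \<in> Cfun X" and r: "0 < r" for n f r
  proof -
    obtain g where "g \<in> Cfun X" "\<forall>x\<in>topspace X. \<bar>g x - f x\<bar> \<le> 2 * (r / 4)"
      "\<And>h a. \<forall>x\<in>topspace X. \<bar>h x - g x\<bar> \<le> r / 4 \<Longrightarrow> a \<in> A n \<Longrightarrow> \<exists>x\<in>topspace X. r / 4 \<le> \<bar>h x - a x\<bar>"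
      by (rule Cfun_uniform_ball_far_from_finite[where \<rho> = "r / 4", OF cr t1 inf f _ A[of n]]) (use r in auto)
    with r show ?thesis
      unfolding Q_def by (intro exI[of _ g] exI[of _ "r / 4"]) auto
  qed
  obtain F fs rs where F: "F \<in> Cfun X" and "rs 0 = 1"
    and Q: "\<And>n. Q n (fs n) (rs n) (fs (Suc n)) (rs (Suc n))"
    and close: "\<And>n x. x \<in> topspace X \<Longrightarrow> \<bar>F x - fs n x\<bar> \<le> rs n"
    by (rule nested_balls_limit[where Q = Q, OF step Cfun_zero zero_less_one]) (assumption | rule that)+
  have quarter: "rs (Suc n) = rs n / 4" for n
    using Q[of n] unfolding Q_def by blast
  have rs: "rs n = 1 / 4 ^ n" for n
    by (induction n) (simp_all add: \<open>rs 0 = 1\<close> quarter)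
  have "F \<in> (\<Union>n. setplus (A n) (U n))"
    using F cover by simp
  then obtain n a u where "a \<in> A n" "u \<in> U n" "F = a + u"
    unfolding setplus_def by blast
  moreover obtain x where "x \<in> topspace X" "1 / 4 ^ Suc n \<le> \<bar>F x - a x\<bar>"
    using Q[of n] close[of _ "Suc n"] \<open>a \<in> A n\<close> unfolding Q_def rs by blast
  ultimately show False
    unfolding U_def sup_norm_ball_def by force
qed

section \<open>Sigma-compactness of the pointwise topology\<close>

lemma continuous_map_Cp_eval:
  assumes x: "x \<in> topspace X"
  shows "continuous_map (Cp X) euclideanreal (\<lambda>f. f x)"
  unfolding continuous_map_def
proof (intro conjI allI impI)
  show "(\<lambda>f. f x) \<in> topspace (Cp X) \<rightarrow> topspace euclideanreal"
    by simp
  fix V :: "real set" assume "openin euclideanreal V"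
  then have V: "open V"
    by simp
  show "openin (Cp X) {f \<in> topspace (Cp X). f x \<in> V}"
    unfolding openin_Cp
  proof (intro conjI ballI)
    show "{f \<in> topspace (Cp X). f x \<in> V} \<subseteq> Cfun X"
      by auto
    fix f assume f: "f \<in> {f \<in> topspace (Cp X). f x \<in> V}"
    then have "f x \<in> V"
      by blast
    with V obtain e where e: "0 < e" "ball (f x) e \<subseteq> V"
      by (rule openE)
    have "{g \<in> Cfun X. \<forall>y\<in>{x}. \<bar>g y - f y\<bar> < e} \<subseteq> {f \<in> topspace (Cp X). f x \<in> V}"
      using e(2) by (auto simp: dist_real_def abs_minus_commute)
    with e(1) x show "\<exists>F \<epsilon>. finite F \<and> F \<subseteq> topspace X \<and> 0 < \<epsilon> \<and>
        {g \<in> Cfun X. \<forall>y\<in>F. \<bar>g y - f y\<bar> < \<epsilon>} \<subseteq> {f \<in> topspace (Cp X). f x \<in> V}"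
      by (intro exI[of _ "{x}"] exI[of _ e]) simp
  qed
qed

lemma Hausdorff_space_Cp: "Hausdorff_space (Cp X)"
  unfolding Hausdorff_space_def
proof (intro allI impI)
  fix f g assume fg: "f \<in> topspace (Cp X) \<and> g \<in> topspace (Cp X) \<and> f \<noteq> g"
  then obtain z where z: "f z \<noteq> g z"
    by (meson ext)
  moreover have "z \<in> topspace X"
    using fg z unfolding Cfun_def topspace_Cp by auto
  ultimately obtain U V where UV: "open U" "open V" "f z \<in> U" "g z \<in> V" "disjnt U V"
    using Hausdorff_space_euclidean unfolding Hausdorff_space_def by (metis UNIV_I open_openin topspace_euclidean)
  have "openin (Cp X) {h \<in> topspace (Cp X). h z \<in> W}" if "open W" for W
    using continuous_map_Cp_eval[OF \<open>z \<in> topspace X\<close>] that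
    by (simp add: continuous_map_def)
  with UV fg show "\<exists>U V. openin (Cp X) U \<and> openin (Cp X) V \<and> f \<in> U \<and> g \<in> V \<and> disjnt U V"
    by (intro exI[of _ "{h \<in> topspace (Cp X). h z \<in> U}"] exI[of _ "{h \<in> topspace (Cp X). h z \<in> V}"])
      (auto simp: disjnt_def)
qed

lemma sigma_compact_Cp_discrete_imp_finite:
  assumes discrete: "\<forall>x\<in>topspace X. openin X {x}" and sc: "sigma_compact (Cp X)"
  shows "finite (topspace X)"
proof (rule ccontr)
  assume "infinite (topspace X)"
  then obtain xs :: "nat \<Rightarrow> 'a" where xs: "inj xs" "range xs \<subseteq> topspace X"
    using infinite_countable_subset by blast
  obtain K :: "nat \<Rightarrow> ('a \<Rightarrow> real) set" where K: "\<And>n. compactin (Cp X) (K n)" "Cfun X = (\<Union>n. K n)"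
    using sc unfolding sigma_compact_def by auto
  have "bounded ((\<lambda>h. h (xs n)) ` K n)" for n
  proof -
    have "xs n \<in> topspace X"
      using xs(2) by blast
    from image_compactin[OF K(1) continuous_map_Cp_eval[OF this]] show ?thesis
      by (simp add: compact_imp_bounded)
  qed
  then obtain M where M: "\<And>n h. h \<in> K n \<Longrightarrow> \<bar>h (xs n)\<bar> \<le> M n"
    unfolding bounded_iff by (metis image_eqI real_norm_def)
  \<comment> \<open>A diagonal function escaping every K n; it is continuous since X is discrete.\<close>
  define f where "f x = (if x \<in> range xs then M (inv xs x) + 1 else 0)" for x
  have "X = discrete_topology (topspace X)"
    using discrete discrete_topology_unique by metis
  then have "continuous_map X euclideanreal f"
    by (metis continuous_map_from_discrete_topology topspace_euclidean Pi_UNIV UNIV_I)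
  then have "f \<in> Cfun X"
    using xs(2) unfolding Cfun_def f_def by auto
  then obtain n where "f \<in> K n"
    using K(2) by blast
  moreover have "f (xs n) = M n + 1"
    unfolding f_def using xs(1) by simp
  ultimately show False
    using M[of f n] by simp
qed

lemma openin_singleton_if_jump:
  assumes h: "continuous_map X euclideanreal h" and f: "continuous_map X euclideanreal f"
    and p: "p \<in> topspace X" and "h p = f p" and "0 < r"
    and jump: "\<And>x. x \<in> topspace X \<Longrightarrow> x \<noteq> p \<Longrightarrow> h x = f x + r"
  shows "openin X {p}"
proof -
  have "openin X {x \<in> topspace X. h x - f x \<in> {..<r}}"
    using h f by (intro openin_continuous_map_preimage[where Y = euclideanreal] continuous_intros) auto
  moreover have "{x \<in> topspace X. h x - f x \<in> {..<r}} = {p}"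
    using p \<open>h p = f p\<close> \<open>0 < r\<close> jump by force
  ultimately show ?thesis
    by simp
qed

lemma Cfun_bump_on_finite:
  assumes cr: "completely_regular_space X" and t1: "t1_space X"
    and S: "finite S" "S \<subseteq> topspace X" and p: "p \<in> topspace X - S"
    and f: "f \<in> Cfun X" and "0 < r"
  obtains g where "g \<in> Cfun X" "\<forall>x\<in>topspace X. \<bar>g x - f x\<bar> \<le> r" "g p = f p" "\<And>x. x \<in> S \<Longrightarrow> g x = f x + r"
proof -
  have "closedin X S"
    using t1 S by (simp add: t1_space_closedin_finite)
  with p obtain \<phi> :: "'a \<Rightarrow> real" where \<phi>: "continuous_map X (top_of_set {0..1}) \<phi>" "\<phi> p = 0" "\<phi> ` S \<subseteq> {1}"
    using cr unfolding completely_regular_space_def by blast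
  then have \<phi>_cont: "continuous_map X euclideanreal \<phi>" and \<phi>_range: "\<And>x. x \<in> topspace X \<Longrightarrow> \<phi> x \<in> {0..1}"
    unfolding continuous_map_in_subtopology by auto
  define g where "g x = (if x \<in> topspace X then f x + r * \<phi> x else 0)" for x
  have "continuous_map X euclideanreal f"
    using f by (simp add: Cfun_def)
  with \<phi>_cont have "g \<in> Cfun X"
    unfolding g_def by (intro Cfun_if_topspace continuous_intros)
  moreover have "\<bar>g x - f x\<bar> \<le> r" if "x \<in> topspace X" for x
    using that \<phi>_range[OF that] \<open>0 < r\<close> by (simp add: g_def mult_le_cancel_left1)
  moreover have "g p = f p"
    using p \<phi>(2) by (simp add: g_def)
  moreover have "g x = f x + r" if "x \<in> S" for x
    using that S(2) \<phi>(3) by (auto simp: g_def)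
  ultimately show thesis
    using that by blast
qed

lemma compactin_Cp_misses_uniform_ball:
  assumes cr: "completely_regular_space X" and t1: "t1_space X"
    and p: "p \<in> topspace X" "\<not> openin X {p}"
    and K: "compactin (Cp X) K" and f: "f \<in> Cfun X" and r: "0 < r"
  shows "\<exists>g\<in>Cfun X. (\<forall>x\<in>topspace X. \<bar>g x - f x\<bar> \<le> r) \<and> g \<notin> K"
proof (rule ccontr)
  assume "\<not> ?thesis"
  then have ball_K: "g \<in> K" if "g \<in> Cfun X" "\<forall>x\<in>topspace X. \<bar>g x - f x\<bar> \<le> r" for g
    using that by blast
  define C where "C = {h \<in> topspace (Cp X). h p \<in> {f p}}"
  define D where "D x = {h \<in> topspace (Cp X). h x \<in> {f x + r}}" for x
  define \<U> where "\<U> = insert C (D ` (topspace X - {p}))"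
  have "closedin (Cp X) C"
    unfolding C_def using continuous_map_Cp_eval[OF p(1)] by (rule closedin_continuous_map_preimage) simp
  moreover have "closedin (Cp X) (D x)" if "x \<in> topspace X" for x
    unfolding D_def using continuous_map_Cp_eval[OF that] by (rule closedin_continuous_map_preimage) simp
  ultimately have closed: "\<forall>E\<in>\<U>. closedin (Cp X) E"
    unfolding \<U>_def by blast
  \<comment> \<open>Finitely many of the conditions can be met inside the ball, by a bump function.\<close>
  have fip: "K \<inter> \<Inter>\<F> \<noteq> {}" if "finite \<F>" "\<F> \<subseteq> \<U>" for \<F>
  proof -
    obtain S where S: "S \<subseteq> topspace X - {p}" "finite S" "\<F> - {C} = D ` S"
      using \<open>finite \<F>\<close> \<open>\<F> \<subseteq> \<U>\<close> finite_subset_image[of "\<F> - {C}" D "topspace X - {p}"]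
      unfolding \<U>_def by blast
    obtain g where g: "g \<in> Cfun X" "\<forall>x\<in>topspace X. \<bar>g x - f x\<bar> \<le> r" "g p = f p"
      and gS: "\<And>x. x \<in> S \<Longrightarrow> g x = f x + r"
      using Cfun_bump_on_finite[OF cr t1 S(2) _ _ f r, of p] S(1) p(1) by blast
    have "g \<in> C"
      using g(1,3) unfolding C_def by simp
    moreover have "g \<in> D x" if "x \<in> S" for x
      using g(1) gS[OF that] unfolding D_def by simp
    ultimately have "g \<in> E" if "E \<in> \<F>" for E
      using that S(3) by blast
    with ball_K[OF g(1,2)] show ?thesis
      by blast
  qed
  have "(\<forall>E\<in>\<U>. closedin (Cp X) E) \<and> (\<forall>\<F>. finite \<F> \<and> \<F> \<subseteq> \<U> \<longrightarrow> K \<inter> \<Inter>\<F> \<noteq> {})"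
    using closed fip by blast
  then have "K \<inter> \<Inter>\<U> \<noteq> {}"
    using K unfolding compactin_fip by blast
  then obtain h where h: "h \<in> K" "h \<in> \<Inter>\<U>"
    by blast
  have "h \<in> Cfun X"
    using h(1) compactin_subset_topspace[OF K] by auto
  moreover have "h p = f p" "\<And>x. x \<in> topspace X \<Longrightarrow> x \<noteq> p \<Longrightarrow> h x = f x + r"
    using h(2) unfolding \<U>_def C_def D_def by auto
  ultimately have "openin X {p}"
    using f p(1) r by (intro openin_singleton_if_jump[where h = h and f = f]) (auto simp: Cfun_def)
  with p(2) show False
    by blast
qed

lemma compactin_Cp_avoided_by_uniform_ball:
  assumes cr: "completely_regular_space X" and t1: "t1_space X"
    and p: "p \<in> topspace X" "\<not> openin X {p}"
    and K: "compactin (Cp X) K" and f: "f \<in> Cfun X" and r: "0 < r"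
  obtains g \<epsilon> where "g \<in> Cfun X" "\<forall>x\<in>topspace X. \<bar>g x - f x\<bar> \<le> r" "0 < \<epsilon>"
    "\<And>h. h \<in> Cfun X \<Longrightarrow> \<forall>x\<in>topspace X. \<bar>h x - g x\<bar> \<le> \<epsilon> \<Longrightarrow> h \<notin> K"
proof -
  obtain g where g: "g \<in> Cfun X" "\<forall>x\<in>topspace X. \<bar>g x - f x\<bar> \<le> r" "g \<notin> K"
    using compactin_Cp_misses_uniform_ball[OF cr t1 p K f r] by blast
  have "closedin (Cp X) K"
    using compactin_imp_closedin[OF Hausdorff_space_Cp K] .
  then have "openin (Cp X) (Cfun X - K)"
    by (metis closedin_def topspace_Cp)
  with g obtain F \<epsilon> where F: "F \<subseteq> topspace X" "0 < \<epsilon>"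
    and nbhd: "{h \<in> Cfun X. \<forall>x\<in>F. \<bar>h x - g x\<bar> < \<epsilon>} \<subseteq> Cfun X - K"
    unfolding openin_Cp by (meson DiffI bspec)
  have "h \<notin> K" if "h \<in> Cfun X" "\<forall>x\<in>topspace X. \<bar>h x - g x\<bar> \<le> \<epsilon> / 2" for h
  proof -
    have "h \<in> {h \<in> Cfun X. \<forall>x\<in>F. \<bar>h x - g x\<bar> < \<epsilon>}"
      using that F by fastforce
    with nbhd show ?thesis
      by blast
  qed
  with g(1,2) F(2) show thesis
    using that[of g "\<epsilon> / 2"] by simp
qed

lemma sigma_compact_Cp_imp_isolated:
  assumes cr: "completely_regular_space X" and t1: "t1_space X"
    and sc: "sigma_compact (Cp X)" and p: "p \<in> topspace X"
  shows "openin X {p}"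
proof (rule ccontr)
  assume not_open: "\<not> openin X {p}"
  obtain K :: "nat \<Rightarrow> ('a \<Rightarrow> real) set" where K: "\<And>n. compactin (Cp X) (K n)" "Cfun X = (\<Union>n. K n)"
    using sc unfolding sigma_compact_def by auto
  define Q where "Q n f r g r' \<longleftrightarrow> (\<forall>h\<in>Cfun X. (\<forall>x\<in>topspace X. \<bar>h x - g x\<bar> \<le> r') \<longrightarrow> h \<notin> K n)"
    for n and f :: "'a \<Rightarrow> real" and r :: real and g :: "'a \<Rightarrow> real" and r' :: real
  have step: "\<exists>g r'. g \<in> Cfun X \<and> 0 < r' \<and> r' \<le> r / 2 \<and> (\<forall>x\<in>topspace X. \<bar>g x - f x\<bar> + r' \<le> r) \<and> Q n f r g r'"
    if f: "f \<in> Cfun X" and r: "0 < r" for n f r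
  proof -
    obtain g \<epsilon> where g: "g \<in> Cfun X" "\<forall>x\<in>topspace X. \<bar>g x - f x\<bar> \<le> r / 2" "0 < \<epsilon>"
      and avoid: "\<And>h. h \<in> Cfun X \<Longrightarrow> \<forall>x\<in>topspace X. \<bar>h x - g x\<bar> \<le> \<epsilon> \<Longrightarrow> h \<notin> K n"
      by (rule compactin_Cp_avoided_by_uniform_ball[where r = "r / 2", OF cr t1 p not_open K(1)[of n] f]) (use r in auto)
    have "Q n f r g (min \<epsilon> (r / 4))"
      unfolding Q_def using avoid by force
    moreover have "\<bar>g x - f x\<bar> + min \<epsilon> (r / 4) \<le> r" if "x \<in> topspace X" for x
    proof -
      have "\<bar>g x - f x\<bar> \<le> r / 2" "min \<epsilon> (r / 4) \<le> r / 4"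
        using g(2) that by auto
      with r show ?thesis
        by linarith
    qed
    ultimately show ?thesis
      using g(1,3) r by (intro exI[of _ g] exI[of _ "min \<epsilon> (r / 4)"]) auto
  qed
  obtain F fs rs where F: "F \<in> Cfun X"
    and Q: "\<And>n. Q n (fs n) (rs n) (fs (Suc n)) (rs (Suc n))"
    and close: "\<And>n x. x \<in> topspace X \<Longrightarrow> \<bar>F x - fs n x\<bar> \<le> rs n"
    by (rule nested_balls_limit[where Q = Q, OF step Cfun_zero zero_less_one]) (assumption | rule that)+
  obtain n where "F \<in> K n"
    using F K(2) by blast
  moreover have "F \<notin> K n"
    using Q[of n] close[of _ "Suc n"] F unfolding Q_def by blast
  ultimately show False
    by blast
qed

lemma sigma_compact_Cp_imp_finite:
  assumes "completely_regular_space X" and "t1_space X" and "sigma_compact (Cp X)"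
  shows "finite (topspace X)"
proof (rule sigma_compact_Cp_discrete_imp_finite)
  show "\<forall>x\<in>topspace X. openin X {x}"
    using sigma_compact_Cp_imp_isolated[OF assms] by blast
qed (fact assms(3))

theorem theorem2p8:
  fixes X :: "'a topology"
  assumes "tychonoff_space X"
  shows "(sigma_compact (Cm X) \<longleftrightarrow> finite (topspace X))
       \<and> (strictly_H_bounded (Cm X) \<longleftrightarrow> finite (topspace X))
       \<and> (H_bounded (Cm X) \<longleftrightarrow> finite (topspace X))
       \<and> (strictly_M_bounded (Cm X) \<longleftrightarrow> finite (topspace X))
       \<and> (M_bounded (Cm X) \<longleftrightarrow> finite (topspace X))
       \<and> (M_bounded (Cu X) \<longleftrightarrow> finite (topspace X))
       \<and> (sigma_compact (Cp X) \<longleftrightarrow> finite (topspace X))"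
proof -
  have cr: "completely_regular_space X" and t1: "t1_space X"
    using assms Hausdorff_imp_t1_space unfolding tychonoff_space_def by auto
  have add_closed: "\<And>a u. a \<in> topspace (Cm X) \<Longrightarrow> u \<in> topspace (Cm X) \<Longrightarrow> a + u \<in> topspace (Cm X)"
    by (simp add: Cfun_add)
  have "finite (topspace X) \<Longrightarrow> sigma_compact (Cm X)"
    using t1 by (rule finite_imp_sigma_compact_Cm)
  moreover have "sigma_compact (Cm X) \<Longrightarrow> strictly_H_bounded (Cm X)"
    by (rule sigma_compact_Cm_imp_strictly_H_bounded)
  moreover have "strictly_H_bounded (Cm X) \<Longrightarrow> H_bounded (Cm X)"
    by (rule strictly_H_bounded_imp_H_bounded)
  moreover have "H_bounded (Cm X) \<Longrightarrow> M_bounded (Cm X)"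
    by (rule H_bounded_imp_M_bounded[OF add_closed])
  moreover have "strictly_H_bounded (Cm X) \<Longrightarrow> strictly_M_bounded (Cm X)"
    by (rule strictly_H_bounded_imp_strictly_M_bounded[OF add_closed])
  moreover have "strictly_M_bounded (Cm X) \<Longrightarrow> M_bounded (Cm X)"
    by (rule strictly_M_bounded_imp_M_bounded)
  moreover have "M_bounded (Cm X) \<Longrightarrow> M_bounded (Cu X)"
    by (rule M_bounded_coarser) (simp_all add: openin_Cu_imp_openin_Cm)
  moreover have "M_bounded (Cu X) \<Longrightarrow> finite (topspace X)"
    using cr t1 by (rule M_bounded_Cu_imp_finite)
  moreover have "sigma_compact (Cm X) \<Longrightarrow> sigma_compact (Cp X)"
    by (rule sigma_compact_coarser) (simp_all add: openin_Cp_imp_openin_Cm)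
  moreover have "sigma_compact (Cp X) \<Longrightarrow> finite (topspace X)"
    using cr t1 by (rule sigma_compact_Cp_imp_finite)
  ultimately show ?thesis
    by meson
qed

end
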